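(* Let $n\ge1$, $\preceq$ an admissible order on $L([0,1])$ and $F\colon L([0,1])^2\to L([0,1])$, $G\colon L([0,1])^n\to L([0,1])$. (i) The IV Sugeno-like $FG$-functional $\mathbf S_m^{F,\vee}$ satisfies: (a) $\mathbf S_m^{F,\vee}\succeq\wedge$ for every IV fuzzy measure $m$ whenever $F(X,\mathbf1)\succeq X$ for all $X$ and $F$ is non-decreasing in the second variable; (a$^s$) $\mathbf S_m^{F,\vee}\succeq\wedge$ for every symmetric $m$ whenever $F(X,\mathbf1)\succeq X$ for all $X$; (b) $\mathbf S_m^{F,\vee}\preceq\vee$ for every $m$ whenever $F(X,\mathbf1)\preceq X$ for all $X$ and $F$ is non-decreasing in the second variable; (b$^s$) $\mathbf S_m^{F,\vee}\preceq\vee$ for every symmetric $m$ whenever $F(X,Y)\preceq X$ for all $X,Y$; (c) $\mathbf S_m^{F,\vee}$ is internal for every $m$ whenever $F(X,\mathbf1)=X$ for all $X$ and $F$ is non-decreasing in the second variable; (c$^s$) $\mathbf S_m^{F,\vee}$ is internal for every symmetric $m$ whenever $F(X,Y)\preceq X$ and $F(X,\mathbf1)=X$ for all $X,Y$. (ii) The functional $\mathbf S_m^{\wedge,G}$ satisfies: (a) $\mathbf S_m^{\wedge,G}\succeq\wedge$ for every $m$ whenever $G=f\circ\mathrm{Proj}_1$ or $G=f\circ\vee$ for some $f\colon L([0,1])\to L([0,1])$ with $f\succeq\mathrm{Id}$; (b) $\mathbf S_m^{\wedge,G}\preceq\vee$ for every $m$ whenever $G=f\circ\mathrm{Proj}_1$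 or $G=f\circ\vee$ with $f\preceq\mathrm{Id}$; (c) $\mathbf S_m^{\wedge,G}$ is internal for every $m$ whenever $G=\mathrm{Proj}_1$ or $G=\vee$. (iii) $\mathbf S_m^{\wedge,\vee}$ is internal for every $m$.
   Context: $N=\{1,\dots,n\}$. $L([0,1])=\{[a,b]:0\le a\le b\le1\}$, $\mathbf0=[0,0]$, $\mathbf1=[1,1]$. An admissible order $\preceq$ is a total order on $L([0,1])$ with $[a,b]\preceq[c,d]$ whenever $a\le c$, $b\le d$. $\vee,\wedge$ denote maximum and minimum w.r.t. $\preceq$; monotonicity is w.r.t. $\preceq$; $\mathrm{Proj}_1(X_1,\dots,X_n)=X_1$; $f\succeq\mathrm{Id}$ means $f(X)\succeq X$ for all $X$. $\mathbf S\succeq\wedge$ means $\mathbf S(X_1,\dots,X_n)\succeq\wedge(X_1,\dots,X_n)$ for all inputs; $\mathbf S\preceq\vee$ analogously; internal means both. An IV fuzzy measure w.r.t. $\preceq$ is $m\colon2^N\to L([0,1])$, $m(\emptyset)=\mathbf0$, $m(N)=\mathbf1$, $m(A)\preceq m(B)$ for $A\subseteq B$; symmetric if $m(A)=m(B)$ whenever $|A|=|B|$. For a permutation $\sigma$, $E_{\sigma(i)}=\{\sigma(i),\dots,\sigma(n)\}$. $\mathbf S_m^{F,G}(X_1,\dots,X_n)=G\big(F(X_{\sigma(1)},m(E_{\sigma(1)})),\dots,F(X_{\sigma(n)},m(E_{\sigma(n)}))\big)$ with $\sigma$ any permutation such that $X_{\sigma(1)}\preceq\dots\preceq X_{\sigma(n)}$;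 it is defined when this value does not depend on the choice of $\sigma$ for all inputs. *)

theory Defs
  imports Complex_Main "HOL-Combinatorics.Permutations"
begin

text \<open>Closed subintervals [a,b] of [0,1] are represented as pairs (a,b).\<close>
type_synonym iv = "real \<times> real"

definition L01 :: "iv set" where
  "L01 = {(a, b). 0 \<le> a \<and> a \<le> b \<and> b \<le> 1}"

definition iv0 :: iv where "iv0 = (0, 0)"
definition iv1 :: iv where "iv1 = (1, 1)"

definition admissible_order :: "(iv \<Rightarrow> iv \<Rightarrow> bool) \<Rightarrow> bool" where
  "admissible_order le \<longleftrightarrow>
     (\<forall>x\<in>L01. le x x) \<and>
     (\<forall>x\<in>L01. \<forall>y\<in>L01. le x y \<and> le y x \<longrightarrow> x = y) \<and>
     (\<forall>x\<in>L01. \<forall>y\<in>L01. \<forall>z\<in>L01. le x y \<and> le y z \<longrightarrow> le x z) \<and>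
     (\<forall>x\<in>L01. \<forall>y\<in>L01. le x y \<or> le y x) \<and>
     (\<forall>x\<in>L01. \<forall>y\<in>L01. fst x \<le> fst y \<and> snd x \<le> snd y \<longrightarrow> le x y)"

text \<open>Inputs (X_1,...,X_n) are functions nat => iv, only indices 1..n matter.\<close>
definition inputs :: "nat \<Rightarrow> (nat \<Rightarrow> iv) set" where
  "inputs n = {X. \<forall>i\<in>{1..n}. X i \<in> L01}"

definition ivmax :: "nat \<Rightarrow> (iv \<Rightarrow> iv \<Rightarrow> bool) \<Rightarrow> (nat \<Rightarrow> iv) \<Rightarrow> iv" where
  "ivmax n le X = (THE x. x \<in> X ` {1..n} \<and> (\<forall>i\<in>{1..n}. le (X i) x))"

definition ivmin :: "nat \<Rightarrow> (iv \<Rightarrow> iv \<Rightarrow> bool) \<Rightarrow> (nat \<Rightarrow> iv) \<Rightarrow> iv" where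
  "ivmin n le X = (THE x. x \<in> X ` {1..n} \<and> (\<forall>i\<in>{1..n}. le x (X i)))"

definition ivinf :: "(iv \<Rightarrow> iv \<Rightarrow> bool) \<Rightarrow> iv \<Rightarrow> iv \<Rightarrow> iv" where
  "ivinf le X Y = (if le X Y then X else Y)"

definition IV_fuzzy_measure :: "nat \<Rightarrow> (iv \<Rightarrow> iv \<Rightarrow> bool) \<Rightarrow> (nat set \<Rightarrow> iv) \<Rightarrow> bool" where
  "IV_fuzzy_measure n le m \<longleftrightarrow>
     (\<forall>A. A \<subseteq> {1..n} \<longrightarrow> m A \<in> L01) \<and>
     m {} = iv0 \<and> m {1..n} = iv1 \<and>
     (\<forall>A B. A \<subseteq> B \<and> B \<subseteq> {1..n} \<longrightarrow> le (m A) (m B))"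

definition symmetric_measure :: "nat \<Rightarrow> (nat set \<Rightarrow> iv) \<Rightarrow> bool" where
  "symmetric_measure n m \<longleftrightarrow>
     (\<forall>A B. A \<subseteq> {1..n} \<and> B \<subseteq> {1..n} \<and> card A = card B \<longrightarrow> m A = m B)"

definition sorting_perm :: "nat \<Rightarrow> (iv \<Rightarrow> iv \<Rightarrow> bool) \<Rightarrow> (nat \<Rightarrow> iv) \<Rightarrow> (nat \<Rightarrow> nat) \<Rightarrow> bool" where
  "sorting_perm n le X \<sigma> \<longleftrightarrow> \<sigma> permutes {1..n} \<and>
     (\<forall>i j. 1 \<le> i \<and> i \<le> j \<and> j \<le> n \<longrightarrow> le (X (\<sigma> i)) (X (\<sigma> j)))"

definition SFG_perm :: "nat \<Rightarrow> (iv \<Rightarrow> iv \<Rightarrow> iv) \<Rightarrow> ((nat \<Rightarrow> iv) \<Rightarrow> iv) \<Rightarrow> (nat set \<Rightarrow> iv)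
    \<Rightarrow> (nat \<Rightarrow> nat) \<Rightarrow> (nat \<Rightarrow> iv) \<Rightarrow> iv" where
  "SFG_perm n F G m \<sigma> X =
     G (\<lambda>i. if i \<in> {1..n} then F (X (\<sigma> i)) (m (\<sigma> ` {i..n})) else iv0)"

definition SFG_defined :: "nat \<Rightarrow> (iv \<Rightarrow> iv \<Rightarrow> bool) \<Rightarrow> (iv \<Rightarrow> iv \<Rightarrow> iv) \<Rightarrow> ((nat \<Rightarrow> iv) \<Rightarrow> iv)
    \<Rightarrow> (nat set \<Rightarrow> iv) \<Rightarrow> bool" where
  "SFG_defined n le F G m \<longleftrightarrow>
     (\<forall>X\<in>inputs n. \<forall>\<sigma> \<tau>. sorting_perm n le X \<sigma> \<and> sorting_perm n le X \<tau> \<longrightarrow>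
        SFG_perm n F G m \<sigma> X = SFG_perm n F G m \<tau> X)"

definition SFG :: "nat \<Rightarrow> (iv \<Rightarrow> iv \<Rightarrow> bool) \<Rightarrow> (iv \<Rightarrow> iv \<Rightarrow> iv) \<Rightarrow> ((nat \<Rightarrow> iv) \<Rightarrow> iv)
    \<Rightarrow> (nat set \<Rightarrow> iv) \<Rightarrow> (nat \<Rightarrow> iv) \<Rightarrow> iv" where
  "SFG n le F G m X = SFG_perm n F G m (SOME \<sigma>. sorting_perm n le X \<sigma>) X"

definition above_min :: "nat \<Rightarrow> (iv \<Rightarrow> iv \<Rightarrow> bool) \<Rightarrow> ((nat \<Rightarrow> iv) \<Rightarrow> iv) \<Rightarrow> bool" where
  "above_min n le \<Phi> \<longleftrightarrow> (\<forall>X\<in>inputs n. le (ivmin n le X) (\<Phi> X))"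

definition below_max :: "nat \<Rightarrow> (iv \<Rightarrow> iv \<Rightarrow> bool) \<Rightarrow> ((nat \<Rightarrow> iv) \<Rightarrow> iv) \<Rightarrow> bool" where
  "below_max n le \<Phi> \<longleftrightarrow> (\<forall>X\<in>inputs n. le (\<Phi> X) (ivmax n le X))"

definition internal :: "nat \<Rightarrow> (iv \<Rightarrow> iv \<Rightarrow> bool) \<Rightarrow> ((nat \<Rightarrow> iv) \<Rightarrow> iv) \<Rightarrow> bool" where
  "internal n le \<Phi> \<longleftrightarrow> above_min n le \<Phi> \<and> below_max n le \<Phi>"

definition mono_second :: "(iv \<Rightarrow> iv \<Rightarrow> bool) \<Rightarrow> (iv \<Rightarrow> iv \<Rightarrow> iv) \<Rightarrow> bool" where
  "mono_second le F \<longleftrightarrow> (\<forall>X\<in>L01. \<forall>Y\<in>L01. \<forall>Z\<in>L01. le Y Z \<longrightarrow> le (F X Y) (F X Z))"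

definition is_f_proj1 :: "nat \<Rightarrow> ((nat \<Rightarrow> iv) \<Rightarrow> iv) \<Rightarrow> (iv \<Rightarrow> iv) \<Rightarrow> bool" where
  "is_f_proj1 n G f \<longleftrightarrow> (\<forall>Y\<in>inputs n. G Y = f (Y 1))"

definition is_f_max :: "nat \<Rightarrow> (iv \<Rightarrow> iv \<Rightarrow> bool) \<Rightarrow> ((nat \<Rightarrow> iv) \<Rightarrow> iv) \<Rightarrow> (iv \<Rightarrow> iv) \<Rightarrow> bool" where
  "is_f_max n le G f \<longleftrightarrow> (\<forall>Y\<in>inputs n. G Y = f (ivmax n le Y))"

end

theory Submission
  imports Defs
begin

(* If \<sigma> sorts the inputs increasingly then E_\<sigma>(1) = N, so the first argument of G is
   F(min X, 1).  For G = \<or> this argument alone gives min X \<preceq> F(min X, 1) \<preceq> S(X), and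
   F(X_\<sigma>(i), m(E_\<sigma>(i))) \<preceq> X_\<sigma>(i) \<preceq> max X for every argument gives S(X) \<preceq> max X; monotonicity
   in the second variable only serves to turn F(X, 1) \<preceq> X into F(X, Y) \<preceq> X.  For F = \<wedge> the
   first argument is min X itself, so G = f \<circ> Proj_1 yields f(min X) and G = f \<circ> \<or> yields f
   applied to S^{\<wedge>,\<or>}(X), which reduces (ii) to (i). *)

definition SFG_args :: "nat \<Rightarrow> (iv \<Rightarrow> iv \<Rightarrow> iv) \<Rightarrow> (nat set \<Rightarrow> iv) \<Rightarrow> (nat \<Rightarrow> nat)
    \<Rightarrow> (nat \<Rightarrow> iv) \<Rightarrow> nat \<Rightarrow> iv" where
  "SFG_args n F m \<sigma> X = (\<lambda>i. if i \<in> {1..n} then F (X (\<sigma> i)) (m (\<sigma> ` {i..n})) else iv0)"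

lemma inputs_L01: "X \<in> inputs n \<Longrightarrow> i \<in> {1..n} \<Longrightarrow> X i \<in> L01"
  by (simp add: inputs_def)

lemma iv1_in_L01: "iv1 \<in> L01"
  by (simp add: iv1_def L01_def)

lemma permutes_tail_subset:
  fixes n :: nat
  assumes "\<sigma> permutes {1..n}" "1 \<le> i"
  shows "\<sigma> ` {i..n} \<subseteq> {1..n}"
proof -
  have "\<sigma> ` {i..n} \<subseteq> \<sigma> ` {1..n}" using assms(2) by (intro image_mono) auto
  then show ?thesis using permutes_image[OF assms(1)] by simp
qed

lemma SFG_args_in_inputs:
  assumes F_range: "\<forall>X\<in>L01. \<forall>Y\<in>L01. F X Y \<in> L01"
    and m: "IV_fuzzy_measure n le m" and X: "X \<in> inputs n" and \<sigma>: "\<sigma> permutes {1..n}"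
  shows "SFG_args n F m \<sigma> X \<in> inputs n"
proof -
  have "F (X (\<sigma> i)) (m (\<sigma> ` {i..n})) \<in> L01" if "i \<in> {1..n}" for i
  proof -
    have "X (\<sigma> i) \<in> L01" using X permutes_in_image[OF \<sigma>] that by (simp add: inputs_L01)
    moreover have "m (\<sigma> ` {i..n}) \<in> L01"
      using m permutes_tail_subset[OF \<sigma>] that by (simp add: IV_fuzzy_measure_def)
    ultimately show ?thesis using F_range by blast
  qed
  then show ?thesis by (simp add: inputs_def SFG_args_def)
qed

lemma sorting_perm_permutes: "sorting_perm n le X \<sigma> \<Longrightarrow> \<sigma> permutes {1..n}"
  by (simp add: sorting_perm_def)

lemma SFG_eq_args: "SFG n le F G m X = G (SFG_args n F m (SOME \<sigma>. sorting_perm n le X \<sigma>) X)"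
  by (simp add: SFG_def SFG_perm_def SFG_args_def)

lemma ivinf_range: "\<forall>X\<in>L01. \<forall>Y\<in>L01. ivinf le X Y \<in> L01"
  by (simp add: ivinf_def)

context
  fixes le :: "iv \<Rightarrow> iv \<Rightarrow> bool"
  assumes adm: "admissible_order le"
begin

lemma admissible_refl: "x \<in> L01 \<Longrightarrow> le x x"
  using adm unfolding admissible_order_def by blast

lemma admissible_antisym: "x \<in> L01 \<Longrightarrow> y \<in> L01 \<Longrightarrow> le x y \<Longrightarrow> le y x \<Longrightarrow> x = y"
  using adm unfolding admissible_order_def by blast

lemma admissible_trans:
  "x \<in> L01 \<Longrightarrow> y \<in> L01 \<Longrightarrow> z \<in> L01 \<Longrightarrow> le x y \<Longrightarrow> le y z \<Longrightarrow> le x z"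
  using adm unfolding admissible_order_def by blast

lemma admissible_total: "x \<in> L01 \<Longrightarrow> y \<in> L01 \<Longrightarrow> le x y \<or> le y x"
  using adm unfolding admissible_order_def by blast

lemma admissible_le_iv1:
  assumes "x \<in> L01"
  shows "le x iv1"
proof -
  have "fst x \<le> fst iv1" "snd x \<le> snd iv1" using assms by (auto simp: L01_def iv1_def)
  then show ?thesis using adm assms iv1_in_L01 unfolding admissible_order_def by blast
qed

lemma sorting_perm_exists:
  assumes X: "X \<in> inputs n"
  obtains \<sigma> where "sorting_perm n le X \<sigma>"
proof -
  note XL = inputs_L01[OF X]
  define below where "below i = {j \<in> {1..n}. le (X j) (X i)}" for i
  have rank_le: "le (X i) (X j)"
    if ij: "i \<in> {1..n}" "j \<in> {1..n}" and card_le: "card (below i) \<le> card (below j)" for i j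
  proof (rule ccontr)
    assume not_le: "\<not> le (X i) (X j)"
    then have "le (X j) (X i)" using admissible_total XL ij by blast
    then have "below j \<subset> below i"
      using not_le ij XL admissible_refl admissible_trans unfolding below_def by blast
    then have "card (below j) < card (below i)"
      by (rule psubset_card_mono[rotated]) (simp add: below_def)
    then show False using card_le by simp
  qed
  define xs where "xs = sort_key (\<lambda>i. card (below i)) [1..<Suc n]"
  have xs: "distinct xs" "set xs = {1..n}" "length xs = n" "sorted (map (\<lambda>i. card (below i)) xs)"
    by (auto simp: xs_def length_sort)
  define \<sigma> where "\<sigma> i = (if i \<in> {1..n} then xs ! (i - 1) else i)" for i
  have "bij_betw (\<lambda>i. i - 1) {1..n} {..<n}"
    by (rule bij_betwI[where g = Suc]) auto
  from bij_betw_trans[OF this bij_betw_nth[OF xs(1) _ xs(2)[symmetric]]]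
  have "bij_betw (\<lambda>i. xs ! (i - 1)) {1..n} {1..n}"
    using xs(3) by (simp add: comp_def)
  then have "bij_betw \<sigma> {1..n} {1..n}"
    by (rule bij_betw_cong[THEN iffD1, rotated]) (simp add: \<sigma>_def)
  then have perm: "\<sigma> permutes {1..n}"
    by (rule bij_imp_permutes) (auto simp: \<sigma>_def)
  moreover have "le (X (\<sigma> i)) (X (\<sigma> j))" if "1 \<le> i" "i \<le> j" "j \<le> n" for i j
  proof (rule rank_le)
    show "\<sigma> i \<in> {1..n}" "\<sigma> j \<in> {1..n}"
      using permutes_in_image[OF perm] that by simp_all
    show "card (below (\<sigma> i)) \<le> card (below (\<sigma> j))"
      using sorted_nth_mono[OF xs(4), of "i - 1" "j - 1"] that xs(3) by (simp add: \<sigma>_def)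
  qed
  ultimately show ?thesis using that unfolding sorting_perm_def by blast
qed

lemma ivmax_eqI:
  assumes X: "X \<in> inputs n" and i: "i \<in> {1..n}" and upper: "\<forall>j\<in>{1..n}. le (X j) (X i)"
  shows "ivmax n le X = X i"
  unfolding ivmax_def
proof (rule the_equality)
  fix x assume "x \<in> X ` {1..n} \<and> (\<forall>j\<in>{1..n}. le (X j) x)"
  then show "x = X i" using admissible_antisym inputs_L01[OF X] i upper by blast
qed (use i upper in blast)

lemma ivmin_eqI:
  assumes X: "X \<in> inputs n" and i: "i \<in> {1..n}" and lower: "\<forall>j\<in>{1..n}. le (X i) (X j)"
  shows "ivmin n le X = X i"
  unfolding ivmin_def
proof (rule the_equality)
  fix x assume "x \<in> X ` {1..n} \<and> (\<forall>j\<in>{1..n}. le x (X j))"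
  then show "x = X i" using admissible_antisym inputs_L01[OF X] i lower by blast
qed (use i lower in blast)

lemma sorting_perm_bounds:
  assumes \<sigma>: "sorting_perm n le X \<sigma>" and j: "j \<in> {1..n}"
  shows "le (X (\<sigma> 1)) (X j)" "le (X j) (X (\<sigma> n))"
proof -
  obtain k where "k \<in> {1..n}" "j = \<sigma> k"
    using permutes_image[OF sorting_perm_permutes[OF \<sigma>]] j by blast
  then show "le (X (\<sigma> 1)) (X j)" "le (X j) (X (\<sigma> n))"
    using \<sigma> unfolding sorting_perm_def by auto
qed

lemma sorting_perm_first_last_mem:
  assumes "sorting_perm n le X \<sigma>" "n \<ge> 1"
  shows "\<sigma> 1 \<in> {1..n}" "\<sigma> n \<in> {1..n}"
  using assms(2) permutes_in_image[OF sorting_perm_permutes[OF assms(1)]] by simp_all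

lemma sorting_perm_ivmin_ivmax:
  assumes \<sigma>: "sorting_perm n le X \<sigma>" and X: "X \<in> inputs n" and n: "n \<ge> 1"
  shows "ivmin n le X = X (\<sigma> 1)" "ivmax n le X = X (\<sigma> n)"
  using ivmin_eqI[OF X] ivmax_eqI[OF X] sorting_perm_first_last_mem[OF \<sigma> n]
    sorting_perm_bounds[OF \<sigma>] by blast+

lemma ivmax_mem:
  assumes "X \<in> inputs n" "n \<ge> 1"
  obtains i where "i \<in> {1..n}" "ivmax n le X = X i"
proof -
  obtain \<sigma> where \<sigma>: "sorting_perm n le X \<sigma>" using sorting_perm_exists[OF assms(1)] .
  then show ?thesis
    using that sorting_perm_ivmin_ivmax(2)[OF \<sigma> assms] sorting_perm_first_last_mem[OF \<sigma> assms(2)]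
    by blast
qed

lemma ivmin_mem:
  assumes "X \<in> inputs n" "n \<ge> 1"
  obtains i where "i \<in> {1..n}" "ivmin n le X = X i"
proof -
  obtain \<sigma> where \<sigma>: "sorting_perm n le X \<sigma>" using sorting_perm_exists[OF assms(1)] .
  then show ?thesis
    using that sorting_perm_ivmin_ivmax(1)[OF \<sigma> assms] sorting_perm_first_last_mem[OF \<sigma> assms(2)]
    by blast
qed

lemma ivmax_upper:
  assumes "X \<in> inputs n" "i \<in> {1..n}"
  shows "le (X i) (ivmax n le X)"
proof -
  obtain \<sigma> where \<sigma>: "sorting_perm n le X \<sigma>" using sorting_perm_exists[OF assms(1)] .
  then show ?thesis
    using sorting_perm_ivmin_ivmax(2)[OF \<sigma> assms(1)] sorting_perm_bounds(2)[OF \<sigma> assms(2)] assms(2)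
    by simp
qed

lemma ivmax_in_L01:
  assumes "X \<in> inputs n" "n \<ge> 1"
  shows "ivmax n le X \<in> L01"
proof -
  obtain i where "i \<in> {1..n}" "ivmax n le X = X i" using ivmax_mem[OF assms] .
  then show ?thesis using inputs_L01[OF assms(1)] by simp
qed

lemma ivmin_in_L01:
  assumes "X \<in> inputs n" "n \<ge> 1"
  shows "ivmin n le X \<in> L01"
proof -
  obtain i where "i \<in> {1..n}" "ivmin n le X = X i" using ivmin_mem[OF assms] .
  then show ?thesis using inputs_L01[OF assms(1)] by simp
qed

lemma ivmin_le_ivmax:
  assumes "X \<in> inputs n" "n \<ge> 1"
  shows "le (ivmin n le X) (ivmax n le X)"
proof -
  obtain i where "i \<in> {1..n}" "ivmin n le X = X i" using ivmin_mem[OF assms] .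
  then show ?thesis using ivmax_upper[OF assms(1)] by simp
qed

lemma ivinf_le_left: "X \<in> L01 \<Longrightarrow> Y \<in> L01 \<Longrightarrow> le (ivinf le X Y) X"
  using admissible_refl admissible_total[of X Y] by (auto simp: ivinf_def)

lemma ivinf_iv1: "X \<in> L01 \<Longrightarrow> ivinf le X iv1 = X"
  using admissible_le_iv1 by (simp add: ivinf_def)

lemma mono_second_le_first:
  assumes mono: "mono_second le F" and F_range: "\<forall>X\<in>L01. \<forall>Y\<in>L01. F X Y \<in> L01"
    and F_iv1: "\<forall>X\<in>L01. le (F X iv1) X"
  shows "\<forall>X\<in>L01. \<forall>Y\<in>L01. le (F X Y) X"
proof (intro ballI)
  fix X Y assume X: "X \<in> L01" and Y: "Y \<in> L01"
  have "le (F X Y) (F X iv1)"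
    using mono X Y iv1_in_L01 admissible_le_iv1 by (simp add: mono_second_def)
  then show "le (F X Y) X"
    using admissible_trans F_range X Y iv1_in_L01 F_iv1 by blast
qed

lemma sorting_perm_some: "X \<in> inputs n \<Longrightarrow> sorting_perm n le X (SOME \<sigma>. sorting_perm n le X \<sigma>)"
  using sorting_perm_exists someI by metis

lemma SFG_sorted_args:
  assumes "X \<in> inputs n"
  obtains \<sigma> where "sorting_perm n le X \<sigma>" "SFG n le F G m X = G (SFG_args n F m \<sigma> X)"
  using that sorting_perm_some[OF assms] SFG_eq_args by blast

(* Both sides use the same sorting permutation, since SFG chooses it independently of G. *)
lemma SFG_comp:
  assumes G: "\<forall>Y\<in>inputs n. G Y = f (H Y)" and F_range: "\<forall>X\<in>L01. \<forall>Y\<in>L01. F X Y \<in> L01"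
    and m: "IV_fuzzy_measure n le m" and X: "X \<in> inputs n"
  shows "SFG n le F G m X = f (SFG n le F H m X)"
  using G SFG_args_in_inputs[OF F_range m X sorting_perm_permutes[OF sorting_perm_some[OF X]]]
  by (simp add: SFG_eq_args)

lemma SFG_args_first:
  assumes \<sigma>: "sorting_perm n le X \<sigma>" and m: "IV_fuzzy_measure n le m"
    and X: "X \<in> inputs n" and n: "n \<ge> 1"
  shows "SFG_args n F m \<sigma> X 1 = F (ivmin n le X) iv1"
proof -
  have "\<sigma> ` {1..n} = {1..n}" using permutes_image[OF sorting_perm_permutes[OF \<sigma>]] .
  then show ?thesis
    using m n sorting_perm_ivmin_ivmax(1)[OF \<sigma> X n] by (simp add: SFG_args_def IV_fuzzy_measure_def)
qed

lemma SFG_args_le_ivmax: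
  assumes F_range: "\<forall>X\<in>L01. \<forall>Y\<in>L01. F X Y \<in> L01"
    and F_le: "\<forall>X\<in>L01. \<forall>Y\<in>L01. le (F X Y) X"
    and m: "IV_fuzzy_measure n le m" and X: "X \<in> inputs n" and \<sigma>: "\<sigma> permutes {1..n}"
    and i: "i \<in> {1..n}"
  shows "le (SFG_args n F m \<sigma> X i) (ivmax n le X)"
proof -
  have x: "X (\<sigma> i) \<in> L01" using X permutes_in_image[OF \<sigma>] i by (simp add: inputs_L01)
  have y: "m (\<sigma> ` {i..n}) \<in> L01"
    using m permutes_tail_subset[OF \<sigma>] i by (simp add: IV_fuzzy_measure_def)
  have n: "n \<ge> 1" using i by simp
  have "le (F (X (\<sigma> i)) (m (\<sigma> ` {i..n}))) (X (\<sigma> i))" using F_le x y by blast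
  moreover have "le (X (\<sigma> i)) (ivmax n le X)"
    using ivmax_upper[OF X] permutes_in_image[OF \<sigma>] i by simp
  ultimately have "le (F (X (\<sigma> i)) (m (\<sigma> ` {i..n}))) (ivmax n le X)"
    using admissible_trans F_range x y ivmax_in_L01[OF X n] by blast
  then show ?thesis using i by (simp add: SFG_args_def)
qed

lemma SFG_max_above_min:
  assumes n: "n \<ge> 1" and F_range: "\<forall>X\<in>L01. \<forall>Y\<in>L01. F X Y \<in> L01"
    and F_iv1: "\<forall>X\<in>L01. le X (F X iv1)" and m: "IV_fuzzy_measure n le m"
  shows "above_min n le (SFG n le F (ivmax n le) m)"
  unfolding above_min_def
proof
  fix X assume X: "X \<in> inputs n"
  obtain \<sigma> where \<sigma>: "sorting_perm n le X \<sigma>"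
    and SFG_eq: "SFG n le F (ivmax n le) m X = ivmax n le (SFG_args n F m \<sigma> X)"
    using SFG_sorted_args[OF X] .
  let ?Y = "SFG_args n F m \<sigma> X"
  have Y: "?Y \<in> inputs n"
    using SFG_args_in_inputs[OF F_range m X sorting_perm_permutes[OF \<sigma>]] .
  have first: "1 \<in> {1..n}" using n by simp
  have "le (ivmin n le X) (?Y 1)"
    using F_iv1 ivmin_in_L01[OF X n] SFG_args_first[OF \<sigma> m X n] by simp
  moreover have "le (?Y 1) (ivmax n le ?Y)" using ivmax_upper[OF Y first] .
  ultimately have "le (ivmin n le X) (ivmax n le ?Y)"
    by (rule admissible_trans[OF ivmin_in_L01[OF X n] inputs_L01[OF Y first] ivmax_in_L01[OF Y n]])
  then show "le (ivmin n le X) (SFG n le F (ivmax n le) m X)"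
    using SFG_eq by simp
qed

lemma SFG_max_below_max:
  assumes n: "n \<ge> 1" and F_range: "\<forall>X\<in>L01. \<forall>Y\<in>L01. F X Y \<in> L01"
    and F_le: "\<forall>X\<in>L01. \<forall>Y\<in>L01. le (F X Y) X" and m: "IV_fuzzy_measure n le m"
  shows "below_max n le (SFG n le F (ivmax n le) m)"
  unfolding below_max_def
proof
  fix X assume X: "X \<in> inputs n"
  obtain \<sigma> where \<sigma>: "sorting_perm n le X \<sigma>"
    and SFG_eq: "SFG n le F (ivmax n le) m X = ivmax n le (SFG_args n F m \<sigma> X)"
    using SFG_sorted_args[OF X] .
  note perm = sorting_perm_permutes[OF \<sigma>]
  obtain i where "i \<in> {1..n}" "ivmax n le (SFG_args n F m \<sigma> X) = SFG_args n F m \<sigma> X i"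
    using ivmax_mem[OF SFG_args_in_inputs[OF F_range m X perm] n] .
  then show "le (SFG n le F (ivmax n le) m X) (ivmax n le X)"
    using SFG_args_le_ivmax[OF F_range F_le m X perm] SFG_eq by simp
qed

lemma SFG_ivmax_in_L01:
  assumes n: "n \<ge> 1" and F_range: "\<forall>X\<in>L01. \<forall>Y\<in>L01. F X Y \<in> L01"
    and m: "IV_fuzzy_measure n le m" and X: "X \<in> inputs n"
  shows "SFG n le F (ivmax n le) m X \<in> L01"
proof -
  obtain \<sigma> where \<sigma>: "sorting_perm n le X \<sigma>"
    and "SFG n le F (ivmax n le) m X = ivmax n le (SFG_args n F m \<sigma> X)"
    using SFG_sorted_args[OF X] .
  then show ?thesis
    using ivmax_in_L01[OF SFG_args_in_inputs[OF F_range m X sorting_perm_permutes[OF \<sigma>]] n]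
    by simp
qed

lemma SFG_inf_proj1:
  assumes n: "n \<ge> 1" and m: "IV_fuzzy_measure n le m" and X: "X \<in> inputs n"
  shows "SFG n le (ivinf le) (\<lambda>Y. Y 1) m X = ivmin n le X"
proof -
  obtain \<sigma> where \<sigma>: "sorting_perm n le X \<sigma>"
    and "SFG n le (ivinf le) (\<lambda>Y. Y 1) m X = SFG_args n (ivinf le) m \<sigma> X 1"
    using SFG_sorted_args[OF X] .
  then show ?thesis using SFG_args_first[OF \<sigma> m X n] ivinf_iv1 ivmin_in_L01[OF X n] by simp
qed

lemma SFG_inf_cases:
  assumes n: "n \<ge> 1" and m: "IV_fuzzy_measure n le m" and X: "X \<in> inputs n"
    and G: "is_f_proj1 n G f \<or> is_f_max n le G f"
  shows "SFG n le (ivinf le) G m X = f (ivmin n le X) \<or>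
    SFG n le (ivinf le) G m X = f (SFG n le (ivinf le) (ivmax n le) m X)"
  using G
proof
  assume "is_f_proj1 n G f"
  then have "\<forall>Y\<in>inputs n. G Y = f ((\<lambda>Y. Y 1) Y)" by (simp add: is_f_proj1_def)
  then have "SFG n le (ivinf le) G m X = f (SFG n le (ivinf le) (\<lambda>Y. Y 1) m X)"
    by (rule SFG_comp[OF _ ivinf_range m X])
  then show ?thesis using SFG_inf_proj1[OF n m X] by simp
next
  assume "is_f_max n le G f"
  then have "SFG n le (ivinf le) G m X = f (SFG n le (ivinf le) (ivmax n le) m X)"
    by (intro SFG_comp[OF _ ivinf_range m X]) (simp add: is_f_max_def)
  then show ?thesis ..
qed

lemma SFG_inf_above_min:
  assumes n: "n \<ge> 1" and f_range: "\<forall>X\<in>L01. f X \<in> L01" and f_ge: "\<forall>X\<in>L01. le X (f X)"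
    and G: "is_f_proj1 n G f \<or> is_f_max n le G f" and m: "IV_fuzzy_measure n le m"
  shows "above_min n le (SFG n le (ivinf le) G m)"
  unfolding above_min_def
proof
  fix X assume X: "X \<in> inputs n"
  let ?S = "SFG n le (ivinf le) (ivmax n le) m X"
  have S: "?S \<in> L01" using SFG_ivmax_in_L01[OF n ivinf_range m X] .
  have min: "ivmin n le X \<in> L01" using ivmin_in_L01[OF X n] .
  have "le (ivmin n le X) ?S"
    using SFG_max_above_min[OF n ivinf_range _ m] X ivinf_iv1 admissible_refl
    unfolding above_min_def by simp
  then have "le (ivmin n le X) (f ?S)"
    using admissible_trans[OF min S] f_range f_ge S by blast
  moreover have "le (ivmin n le X) (f (ivmin n le X))" using f_ge min by blast
  ultimately show "le (ivmin n le X) (SFG n le (ivinf le) G m X)"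
    using SFG_inf_cases[OF n m X G] by auto
qed

lemma SFG_inf_below_max:
  assumes n: "n \<ge> 1" and f_range: "\<forall>X\<in>L01. f X \<in> L01" and f_le: "\<forall>X\<in>L01. le (f X) X"
    and G: "is_f_proj1 n G f \<or> is_f_max n le G f" and m: "IV_fuzzy_measure n le m"
  shows "below_max n le (SFG n le (ivinf le) G m)"
  unfolding below_max_def
proof
  fix X assume X: "X \<in> inputs n"
  let ?S = "SFG n le (ivinf le) (ivmax n le) m X"
  have S: "?S \<in> L01" using SFG_ivmax_in_L01[OF n ivinf_range m X] .
  have min: "ivmin n le X \<in> L01" using ivmin_in_L01[OF X n] .
  have max: "ivmax n le X \<in> L01" using ivmax_in_L01[OF X n] .
  have "le ?S (ivmax n le X)"
    using SFG_max_below_max[OF n ivinf_range _ m] X ivinf_le_left unfolding below_max_def by blast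
  then have "le (f ?S) (ivmax n le X)"
    using admissible_trans[OF _ S max] f_range f_le S by blast
  moreover have "le (f (ivmin n le X)) (ivmax n le X)"
    using admissible_trans[OF _ min max] f_range f_le min ivmin_le_ivmax[OF X n] by blast
  ultimately show "le (SFG n le (ivinf le) G m X) (ivmax n le X)"
    using SFG_inf_cases[OF n m X G] by auto
qed

end

theorem corollary3:
  fixes n :: nat and le :: "iv \<Rightarrow> iv \<Rightarrow> bool"
    and F :: "iv \<Rightarrow> iv \<Rightarrow> iv" and G :: "(nat \<Rightarrow> iv) \<Rightarrow> iv"
  assumes n: "n \<ge> 1"
    and adm: "admissible_order le"
    and F_range: "\<forall>X\<in>L01. \<forall>Y\<in>L01. F X Y \<in> L01"
    and G_range: "\<forall>Y\<in>inputs n. G Y \<in> L01"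
  shows
   \<comment> \<open>(i)(a)\<close>
   "((\<forall>X\<in>L01. le X (F X iv1)) \<and> mono_second le F \<longrightarrow>
      (\<forall>m. IV_fuzzy_measure n le m \<and> SFG_defined n le F (ivmax n le) m \<longrightarrow>
         above_min n le (SFG n le F (ivmax n le) m))) \<and>
   \<comment> \<open>(i)(a^s)\<close>
    ((\<forall>X\<in>L01. le X (F X iv1)) \<longrightarrow>
      (\<forall>m. IV_fuzzy_measure n le m \<and> symmetric_measure n m \<and> SFG_defined n le F (ivmax n le) m \<longrightarrow>
         above_min n le (SFG n le F (ivmax n le) m))) \<and>
   \<comment> \<open>(i)(b)\<close>
    ((\<forall>X\<in>L01. le (F X iv1) X) \<and> mono_second le F \<longrightarrow>
      (\<forall>m. IV_fuzzy_measure n le m \<and> SFG_defined n le F (ivmax n le) m \<longrightarrow>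
         below_max n le (SFG n le F (ivmax n le) m))) \<and>
   \<comment> \<open>(i)(b^s)\<close>
    ((\<forall>X\<in>L01. \<forall>Y\<in>L01. le (F X Y) X) \<longrightarrow>
      (\<forall>m. IV_fuzzy_measure n le m \<and> symmetric_measure n m \<and> SFG_defined n le F (ivmax n le) m \<longrightarrow>
         below_max n le (SFG n le F (ivmax n le) m))) \<and>
   \<comment> \<open>(i)(c)\<close>
    ((\<forall>X\<in>L01. F X iv1 = X) \<and> mono_second le F \<longrightarrow>
      (\<forall>m. IV_fuzzy_measure n le m \<and> SFG_defined n le F (ivmax n le) m \<longrightarrow>
         internal n le (SFG n le F (ivmax n le) m))) \<and>
   \<comment> \<open>(i)(c^s)\<close>
    ((\<forall>X\<in>L01. \<forall>Y\<in>L01. le (F X Y) X) \<and> (\<forall>X\<in>L01. F X iv1 = X) \<longrightarrow>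
      (\<forall>m. IV_fuzzy_measure n le m \<and> symmetric_measure n m \<and> SFG_defined n le F (ivmax n le) m \<longrightarrow>
         internal n le (SFG n le F (ivmax n le) m))) \<and>
   \<comment> \<open>(ii)(a)\<close>
    ((\<exists>f. (\<forall>X\<in>L01. f X \<in> L01) \<and> (\<forall>X\<in>L01. le X (f X)) \<and>
          (is_f_proj1 n G f \<or> is_f_max n le G f)) \<longrightarrow>
      (\<forall>m. IV_fuzzy_measure n le m \<and> SFG_defined n le (ivinf le) G m \<longrightarrow>
         above_min n le (SFG n le (ivinf le) G m))) \<and>
   \<comment> \<open>(ii)(b)\<close>
    ((\<exists>f. (\<forall>X\<in>L01. f X \<in> L01) \<and> (\<forall>X\<in>L01. le (f X) X) \<and>
          (is_f_proj1 n G f \<or> is_f_max n le G f)) \<longrightarrow>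
      (\<forall>m. IV_fuzzy_measure n le m \<and> SFG_defined n le (ivinf le) G m \<longrightarrow>
         below_max n le (SFG n le (ivinf le) G m))) \<and>
   \<comment> \<open>(ii)(c)\<close>
    ((is_f_proj1 n G id \<or> is_f_max n le G id) \<longrightarrow>
      (\<forall>m. IV_fuzzy_measure n le m \<and> SFG_defined n le (ivinf le) G m \<longrightarrow>
         internal n le (SFG n le (ivinf le) G m))) \<and>
   \<comment> \<open>(iii)\<close>
    (\<forall>m. IV_fuzzy_measure n le m \<and> SFG_defined n le (ivinf le) (ivmax n le) m \<longrightarrow>
         internal n le (SFG n le (ivinf le) (ivmax n le) m))"
proof -
  note max_above_min = SFG_max_above_min[OF adm n F_range]
    and max_below_max = SFG_max_below_max[OF adm n F_range]
    and F_le = mono_second_le_first[OF adm _ F_range]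
    and inf_above_min = SFG_inf_above_min[OF adm n]
    and inf_below_max = SFG_inf_below_max[OF adm n]
  have F_iv1_le: "le X (F X iv1)" "le (F X iv1) X" if "\<forall>X\<in>L01. F X iv1 = X" "X \<in> L01" for X
    using that admissible_refl[OF adm] by simp_all
  have id: "\<forall>X\<in>L01. id X \<in> L01" "\<forall>X\<in>L01. le X (id X)" "\<forall>X\<in>L01. le (id X) X"
    using admissible_refl[OF adm] by simp_all
  have "is_f_max n le (ivmax n le) id"
    by (simp add: is_f_max_def)
  then show ?thesis
    unfolding internal_def
    using max_above_min max_below_max F_le F_iv1_le
      inf_above_min[OF id(1,2)] inf_below_max[OF id(1,3)] inf_above_min inf_below_max
    by blast
qed

end
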